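(* For all positive integers $m$, all real numbers $x_1,\dots,x_m,y_1,\dots,y_m\ge0$ and all real $d>1$, \[\max_{j\in\{1,\dots,m\}}\Big((d-1)x_j^{1/(d-1)}+\sum_{i=1}^j y_i\Big)\ \ge\ d\Big(\frac{1}{\mathrm{e}}\sum_{j=1}^m x_jy_j\Big)^{1/d}.\] *)

theory Defs
  imports "HOL-Analysis.Analysis"
begin

end

theory Submission
  imports Defs
begin

text \<open>Let \<open>M\<close> be the maximum on the left and \<open>a j = M - (y 1 + \<dots> + y j)\<close>. Each term of the
  maximum is at most \<open>M\<close>, so \<open>x j \<le> (a j / (d - 1)) ^ (d - 1)\<close>. Since \<open>a (j - 1) = a j + y j\<close>,
  convexity of \<open>t ^ d\<close> gives \<open>d * y j * a j ^ (d - 1) \<le> a (j - 1) ^ d - a j ^ d\<close>, and summing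
  over \<open>j\<close> telescopes to \<open>\<Sum> x j * y j \<le> M ^ d / (d * (d - 1) ^ (d - 1))\<close>. The right-hand side
  equals \<open>(M / d) ^ d * (1 + 1 / (d - 1)) ^ (d - 1) \<le> e * (M / d) ^ d\<close>.\<close>

lemma powr_convex_increment:
  fixes a y d :: real
  assumes "d > 1" "a \<ge> 0" "y \<ge> 0"
  shows "d * y * a powr (d - 1) \<le> (a + y) powr d - a powr d"
proof -
  let ?b = "a + y"
  have q: "d / (d - 1) > 1" and conj: "1 / d + 1 / (d / (d - 1)) = 1"
    using assms by (simp_all add: field_simps)
  have "?b * a powr (d - 1) \<le> ?b powr d / d + (a powr (d - 1)) powr (d / (d - 1)) / (d / (d - 1))"
    using Youngs_inequality[OF assms(1) q conj] assms by simp
  also have "(a powr (d - 1)) powr (d / (d - 1)) = a powr d"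
    using assms by (simp add: powr_powr)
  finally have "d * (?b * a powr (d - 1)) \<le> ?b powr d + (d - 1) * a powr d"
    using assms by (simp add: field_simps)
  moreover have "a powr d = a * a powr (d - 1)"
    using assms powr_add[of a 1 "d - 1"] by simp
  ultimately show ?thesis by (simp add: algebra_simps)
qed

lemma one_plus_inverse_powr_le_exp:
  fixes t :: real
  assumes "t > 0"
  shows "(1 + 1 / t) powr t \<le> exp 1"
proof -
  have "t * ln (1 + 1 / t) \<le> t * (1 / t)"
    using assms by (intro mult_left_mono ln_add_one_self_le_self) auto
  then show ?thesis
    using assms by (simp add: powr_def)
qed

lemma sum_increment_powr_le:
  fixes a y :: "nat \<Rightarrow> real" and d :: real
  assumes "d > 1"
    and "\<And>j. j \<in> {1..m} \<Longrightarrow> a j \<ge> 0 \<and> y j \<ge> 0"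
    and "\<And>j. j \<in> {1..m} \<Longrightarrow> a (j - 1) = a j + y j"
  shows "d * (\<Sum>j=1..m. a j powr (d - 1) * y j) \<le> a 0 powr d - a m powr d"
proof -
  have "d * (\<Sum>j=1..m. a j powr (d - 1) * y j) = (\<Sum>j=1..m. d * y j * a j powr (d - 1))"
    by (simp add: sum_distrib_left algebra_simps)
  also have "\<dots> \<le> (\<Sum>j=1..m. a (j - 1) powr d - a j powr d)"
    using assms powr_convex_increment by (intro sum_mono) simp
  also have "\<dots> = a 0 powr d - a m powr d"
    using sum_telescope''[of 0 m "\<lambda>j. - (a j powr d)"] by simp
  finally show ?thesis .
qed

lemma sum_mult_le_exp_powr:
  fixes x y :: "nat \<Rightarrow> real" and d M :: real
  assumes "d > 1" "M \<ge> 0"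
    and "\<And>j. j \<in> {1..m} \<Longrightarrow> x j \<ge> 0 \<and> y j \<ge> 0"
    and bound: "\<And>j. j \<in> {1..m} \<Longrightarrow> (d - 1) * x j powr (1 / (d - 1)) + (\<Sum>i=1..j. y i) \<le> M"
  shows "(\<Sum>j=1..m. x j * y j) \<le> exp 1 * (M / d) powr d"
proof -
  define a where "a j = M - (\<Sum>i=1..j. y i)" for j
  define c where "c = d * (d - 1) powr (d - 1)"
  have d1: "d - 1 > 0"
    using assms(1) by simp
  have a_nonneg: "a j \<ge> 0" if "j \<in> {1..m}" for j
  proof -
    have "0 \<le> (d - 1) * x j powr (1 / (d - 1))"
      using d1 by simp
    then show ?thesis
      using bound[OF that] by (simp add: a_def)
  qed
  have a_step: "a (j - 1) = a j + y j" if "j \<in> {1..m}" for j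
    using that by (cases j) (auto simp: a_def)
  have x_bound: "x j \<le> a j powr (d - 1) / (d - 1) powr (d - 1)" if j: "j \<in> {1..m}" for j
  proof -
    have "x j powr (1 / (d - 1)) \<le> a j / (d - 1)"
      using bound[OF j] d1 by (simp add: a_def field_simps)
    then have "(x j powr (1 / (d - 1))) powr (d - 1) \<le> (a j / (d - 1)) powr (d - 1)"
      using d1 by (intro powr_mono2) auto
    then show ?thesis
      using d1 assms(3)[OF j] a_nonneg[OF j] by (simp add: powr_powr powr_divide)
  qed
  have "(\<Sum>j=1..m. x j * y j) \<le> (\<Sum>j=1..m. a j powr (d - 1) * y j) / (d - 1) powr (d - 1)"
    unfolding sum_divide_distrib times_divide_eq_left[symmetric] using x_bound assms(3)
    by (intro sum_mono mult_right_mono) auto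
  also have "\<dots> \<le> M powr d / c"
  proof -
    have "d * (\<Sum>j=1..m. a j powr (d - 1) * y j) \<le> a 0 powr d - a m powr d"
      using assms(1,3) a_nonneg a_step by (intro sum_increment_powr_le) auto
    moreover have "a 0 = M"
      by (simp add: a_def)
    ultimately have "d * (\<Sum>j=1..m. a j powr (d - 1) * y j) \<le> M powr d"
      by (smt (verit) powr_ge_zero)
    then show ?thesis
      using d1 assms(1) by (simp add: c_def field_simps)
  qed
  also have "M powr d / c = (M / d) powr d * (1 + 1 / (d - 1)) powr (d - 1)"
  proof -
    have "d powr d = d * d powr (d - 1)"
      using assms(1) powr_add[of d 1 "d - 1"] by simp
    moreover have "1 + 1 / (d - 1) = d / (d - 1)"
      using d1 by (simp add: field_simps)
    ultimately show ?thesis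
      using assms(1,2) d1 by (simp add: c_def powr_divide field_simps)
  qed
  also have "\<dots> \<le> (M / d) powr d * exp 1"
    using one_plus_inverse_powr_le_exp[OF d1] by (intro mult_left_mono) auto
  finally show ?thesis by (simp add: mult.commute)
qed

theorem lemma3p9:
  fixes m :: nat and x y :: "nat \<Rightarrow> real" and d :: real
  assumes "m \<ge> 1"
    and "\<And>i. i \<in> {1..m} \<Longrightarrow> x i \<ge> 0"
    and "\<And>i. i \<in> {1..m} \<Longrightarrow> y i \<ge> 0"
    and "d > 1"
  shows "(MAX j\<in>{1..m}. (d - 1) * x j powr (1 / (d - 1)) + (\<Sum>i=1..j. y i))
           \<ge> d * ((1 / exp 1) * (\<Sum>j=1..m. x j * y j)) powr (1 / d)"
proof -
  define M where "M = (MAX j\<in>{1..m}. (d - 1) * x j powr (1 / (d - 1)) + (\<Sum>i=1..j. y i))"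
  define S where "S = (\<Sum>j=1..m. x j * y j)"
  have bound: "(d - 1) * x j powr (1 / (d - 1)) + (\<Sum>i=1..j. y i) \<le> M" if "j \<in> {1..m}" for j
    unfolding M_def using that by (intro Max_ge) auto
  have "0 \<le> (d - 1) * x m powr (1 / (d - 1)) + (\<Sum>i=1..m. y i)"
    using assms(3,4) by (intro add_nonneg_nonneg sum_nonneg) auto
  with bound[of m] assms(1) have M: "M \<ge> 0" by simp
  have S: "S \<ge> 0"
    using assms(2,3) by (auto simp: S_def intro: sum_nonneg)
  have "S / exp 1 \<le> (M / d) powr d"
    using sum_mult_le_exp_powr[OF assms(4) M _ bound] assms(2,3)
    by (simp add: S_def field_simps)
  then have "(S / exp 1) powr (1 / d) \<le> ((M / d) powr d) powr (1 / d)"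
    using S assms(4) by (intro powr_mono2) auto
  also have "\<dots> = M / d"
    using M assms(4) by (simp add: powr_powr)
  finally show ?thesis
    using assms(4) by (simp add: M_def S_def field_simps)
qed

end
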